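(* There exist probability measures $\mu,\nu$ on $\{0,1\}^{\mathbb{N}}$ such that $\mathbb{E}_{X\sim\mu}[X_iX_j]=\mathbb{E}_{X\sim\nu}[X_iX_j]$ for all $i,j\in\mathbb{N}$, while $\Delta_n(\mu)\to0$ and $\Delta_n(\nu)\to\tfrac12$ as $n\to\infty$.
   Context: For a probability measure $\mu$ on $\{0,1\}^{\mathbb{N}}$ and $n\ge1$, with $X^{(1)},\dots,X^{(n)}$ i.i.d. from $\mu$, $\Delta_n(\mu):=\mathbb{E}\sup_{j\in\mathbb{N}}\left|\frac1n\sum_{i=1}^nX^{(i)}_j-\mathbb{E}[X_j]\right|$. *)

theory Defs
  imports "HOL-Probability.Probability"
begin

definition bitspace :: "(nat \<Rightarrow> bool) measure" where
  "bitspace = PiM UNIV (\<lambda>_. count_space UNIV)"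

definition Delta :: "nat \<Rightarrow> (nat \<Rightarrow> bool) measure \<Rightarrow> real" where
  "Delta n \<mu> = (\<integral> xs. (SUP j. \<bar>(\<Sum>i<n. of_bool (xs i j)) / real n - (\<integral> x. of_bool (x j) \<partial>\<mu>)\<bar>)
        \<partial>(PiM {..<n} (\<lambda>_. \<mu>)))"

end

theory Submission
  imports Defs "HOL-Real_Asymp.Real_Asymp"
begin

text \<open>
  Both measures are images of independent coins: a fair coin \<open>Global\<close>, a coin \<open>Cluster c\<close> for
  every cluster \<open>c\<close>, and a coin \<open>Local c k\<close> for each of the \<open>width c\<close> slots of cluster \<open>c\<close>.
  Coordinate \<open>(c, k)\<close> is \<open>Global \<and> (Cluster c \<or> Local c k)\<close> under \<open>nu\<close>, where all coins of
  cluster \<open>c\<close> have bias \<open>level c = 2 powr -(c + 2)\<close>, and \<open>Global \<and> Cluster c \<and> Local c k\<close> under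
  \<open>mu\<close>, with biases chosen so that all products \<open>x i * x j\<close> have the same expectation.

  Under \<open>mu\<close>, only finitely many coordinates lie in clusters \<open>\<le> C\<close>, and each of them obeys the
  law of large numbers; every coordinate of a later cluster vanishes unless some \<open>Cluster c\<close> with
  \<open>c > C\<close> is on, which has probability \<open>O(level C)\<close>. Hence \<open>Delta n mu \<rightarrow> 0\<close>.
  Under \<open>nu\<close>, every coordinate is dominated by \<open>Global\<close> and has mean at most \<open>1/2\<close>, so
  \<open>Delta n nu \<le> 1/2 + o(1)\<close>. Conversely, cluster \<open>n\<close> has \<open>width n = (n + 1) / level n ^ n\<close> slots,
  so by the second moment method some \<open>Local n k\<close> is on in all \<open>n\<close> samples with probability at
  least \<open>1 - 1/(n + 1)\<close>. That coordinate then copies \<open>Global\<close> in every sample: its empirical mean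
  is close to \<open>1/2\<close> while its true mean is at most \<open>level n\<close>.
\<close>

section \<open>Independent samples\<close>

abbreviation iid :: "nat \<Rightarrow> 'a measure \<Rightarrow> (nat \<Rightarrow> 'a) measure" where
  "iid n M \<equiv> PiM {..<n} (\<lambda>_. M)"

lemma integrable_bounded_prob:
  fixes f :: "'a \<Rightarrow> real"
  assumes "prob_space M" "f \<in> borel_measurable M" "\<And>x. x \<in> space M \<Longrightarrow> \<bar>f x\<bar> \<le> B"
  shows "integrable M f"
proof -
  interpret prob_space M by fact
  show ?thesis using assms(2,3) by (intro integrable_const_bound[where B=B]) auto
qed

lemma prob_space_iid: "prob_space M \<Longrightarrow> prob_space (iid n M)"
  by (rule prob_space_PiM)

lemma measurable_iid_component [measurable (raw)]:
  "i < n \<Longrightarrow> f \<in> measurable M N \<Longrightarrow> (\<lambda>xs. f (xs i)) \<in> measurable (iid n M) N"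
  by (rule measurable_compose[OF measurable_component_singleton]) auto

lemma integral_iid_component:
  fixes g :: "'a \<Rightarrow> real"
  assumes M: "prob_space M" and "i < n" "g \<in> borel_measurable M"
  shows "(\<integral>xs. g (xs i) \<partial>iid n M) = (\<integral>x. g x \<partial>M)"
proof -
  interpret product_prob_space "\<lambda>_. M" "{..<n}" by (rule product_prob_spaceI) (rule M)
  have "(\<integral>xs. g (xs i) \<partial>iid n M) = (\<integral>x. g x \<partial>distr (iid n M) M (\<lambda>xs. xs i))"
    using assms by (intro integral_distr[symmetric]) auto
  then show ?thesis using PiM_component[of i] \<open>i < n\<close> by simp
qed

lemma integral_iid_prod:
  fixes g :: "'a \<Rightarrow> real"
  assumes M: "prob_space M" and g: "integrable M g"
  shows "(\<integral>xs. (\<Prod>i<n. g (xs i)) \<partial>iid n M) = (\<integral>x. g x \<partial>M) ^ n"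
proof -
  interpret product_prob_space "\<lambda>_. M" "{..<n}" by (rule product_prob_spaceI) (rule M)
  show ?thesis using g by (subst product_integral_prod) auto
qed

lemma integrable_iid_prod:
  fixes g :: "'a \<Rightarrow> real"
  assumes M: "prob_space M" and g: "integrable M g"
  shows "integrable (iid n M) (\<lambda>xs. \<Prod>i<n. g (xs i))"
proof -
  interpret product_prob_space "\<lambda>_. M" "{..<n}" by (rule product_prob_spaceI) (rule M)
  show ?thesis using g by (intro product_integrable_prod) auto
qed

lemma integral_iid_pair:
  fixes g h :: "'a \<Rightarrow> real"
  assumes M: "prob_space M" and "i < n" "l < n" "i \<noteq> l" and g: "integrable M g" and h: "integrable M h"
  shows "(\<integral>xs. g (xs i) * h (xs l) \<partial>iid n M) = (\<integral>x. g x \<partial>M) * (\<integral>x. h x \<partial>M)"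
proof -
  interpret product_prob_space "\<lambda>_. M" "{..<n}" by (rule product_prob_spaceI) (rule M)
  define f where "f = (\<lambda>i' x. (if i' = i then g x else 1) * (if i' = l then h x else 1))"
  have f_int: "integrable M (f i')" for i'
    using g h \<open>i \<noteq> l\<close> by (cases "i' = i"; cases "i' = l") (simp_all add: f_def)
  have f_integral: "integral\<^sup>L M (f i') = (if i' = i then integral\<^sup>L M g else 1) * (if i' = l then integral\<^sup>L M h else 1)" for i'
    using \<open>i \<noteq> l\<close> by (cases "i' = i"; cases "i' = l") (simp_all add: f_def M.prob_space)
  have "(\<integral>xs. g (xs i) * h (xs l) \<partial>iid n M) = (\<integral>xs. (\<Prod>i'<n. f i' (xs i')) \<partial>iid n M)"
    using assms by (simp add: f_def prod.distrib prod.delta)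
  also have "\<dots> = (\<Prod>i'<n. integral\<^sup>L M (f i'))"
    using f_int by (simp add: product_integral_prod)
  also have "\<dots> = (\<integral>x. g x \<partial>M) * (\<integral>x. h x \<partial>M)"
    using assms by (simp add: f_integral prod.distrib prod.delta)
  finally show ?thesis .
qed

lemma integral_iid_sum_square_le:
  fixes h :: "'a \<Rightarrow> real"
  assumes M: "prob_space M" and h: "h \<in> borel_measurable M" "\<And>x. x \<in> space M \<Longrightarrow> \<bar>h x\<bar> \<le> 1"
    and centered: "(\<integral>x. h x \<partial>M) = 0"
  shows "(\<integral>xs. (\<Sum>i<n. h (xs i))\<^sup>2 \<partial>iid n M) \<le> n"
proof -
  interpret M: prob_space M by (rule M)
  have h_int: "integrable M h"
    using h by (intro integrable_bounded_prob[OF M])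
  have hh_bound: "\<bar>h x * h y\<bar> \<le> 1" if "x \<in> space M" "y \<in> space M" for x y
    using h(2)[OF that(1)] h(2)[OF that(2)] by (simp add: abs_mult mult_le_one)
  have pair_int: "integrable (iid n M) (\<lambda>xs. h (xs i) * h (xs l))" if "i < n" "l < n" for i l
    using that h hh_bound by (intro integrable_bounded_prob[OF prob_space_iid[OF M]]) (auto simp: space_PiM)
  have pair: "(\<integral>xs. h (xs i) * h (xs l) \<partial>iid n M) \<le> of_bool (i = l)" if "i < n" "l < n" for i l
  proof (cases "i = l")
    case True
    have "(\<integral>xs. h (xs i) * h (xs l) \<partial>iid n M) = (\<integral>x. h x * h x \<partial>M)"
      using integral_iid_component[OF M \<open>i < n\<close>, of "\<lambda>x. h x * h x"] True h(1) by simp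
    also have "\<dots> \<le> (\<integral>x. 1 \<partial>M)"
      using hh_bound h by (intro integral_mono integrable_bounded_prob[OF M]) (auto simp: abs_le_iff)
    finally show ?thesis using True by (simp add: M.prob_space)
  next
    case False
    then show ?thesis
      using that h_int by (simp add: integral_iid_pair[OF M] centered)
  qed
  have "(\<integral>xs. (\<Sum>i<n. h (xs i))\<^sup>2 \<partial>iid n M) = (\<integral>xs. (\<Sum>i<n. \<Sum>l<n. h (xs i) * h (xs l)) \<partial>iid n M)"
    by (simp add: power2_eq_square sum_product)
  also have "\<dots> = (\<Sum>i<n. \<Sum>l<n. \<integral>xs. h (xs i) * h (xs l) \<partial>iid n M)"
    using pair_int by (subst Bochner_Integration.integral_sum)
      (auto intro!: Bochner_Integration.integrable_sum sum.cong Bochner_Integration.integral_sum)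
  also have "\<dots> \<le> (\<Sum>i<n. \<Sum>l<n. of_bool (i = l))"
    using pair by (intro sum_mono) auto
  finally show ?thesis by simp
qed

lemma integral_abs_le_sqrt_second_moment:
  fixes Y :: "'a \<Rightarrow> real"
  assumes M: "prob_space M" and Y: "integrable M Y" "integrable M (\<lambda>x. (Y x)\<^sup>2)"
    and second_moment: "(\<integral>x. (Y x)\<^sup>2 \<partial>M) \<le> v" and "0 < v"
  shows "(\<integral>x. \<bar>Y x\<bar> \<partial>M) \<le> sqrt v"
proof -
  interpret prob_space M by (rule M)
  let ?s = "sqrt v"
  have "?s > 0" using \<open>0 < v\<close> by simp
  have am_gm: "\<bar>y\<bar> \<le> (?s + y\<^sup>2 / ?s) / 2" for y
  proof -
    have "0 \<le> (\<bar>y\<bar> - ?s)\<^sup>2" by simp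
    then have "2 * ?s * \<bar>y\<bar> \<le> ?s\<^sup>2 + y\<^sup>2" by (simp add: power2_eq_square algebra_simps)
    then show ?thesis using \<open>?s > 0\<close> by (simp add: field_simps power2_eq_square)
  qed
  have "(\<integral>x. \<bar>Y x\<bar> \<partial>M) \<le> (\<integral>x. (?s + (Y x)\<^sup>2 / ?s) / 2 \<partial>M)"
    using Y by (intro integral_mono am_gm) auto
  also have "\<dots> = (?s + (\<integral>x. (Y x)\<^sup>2 \<partial>M) / ?s) / 2"
    using Y by (simp add: prob_space)
  also have "\<dots> \<le> (?s + v / ?s) / 2"
    using second_moment \<open>?s > 0\<close> by (intro divide_right_mono add_left_mono) auto
  also have "\<dots> = ?s"
    using \<open>0 < v\<close> by (simp add: real_div_sqrt)
  finally show ?thesis .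
qed

lemma integral_iid_abs_mean_deviation_le:
  fixes g :: "'a \<Rightarrow> real"
  assumes M: "prob_space M" and g: "g \<in> borel_measurable M" "\<And>x. x \<in> space M \<Longrightarrow> 0 \<le> g x \<and> g x \<le> 1"
    and "n > 0"
  shows "(\<integral>xs. \<bar>(\<Sum>i<n. g (xs i)) / n - (\<integral>x. g x \<partial>M)\<bar> \<partial>iid n M) \<le> 1 / sqrt n"
proof -
  interpret M: prob_space M by (rule M)
  interpret P: prob_space "iid n M" by (rule prob_space_iid[OF M])
  define m where "m = (\<integral>x. g x \<partial>M)"
  have g_int: "integrable M g"
    using g by (intro integrable_bounded_prob[OF M, where B=1]) auto
  have "0 \<le> m"
    unfolding m_def using g by (intro integral_nonneg_AE) auto
  moreover have "m \<le> (\<integral>x. 1 \<partial>M)"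
    unfolding m_def using g g_int by (intro integral_mono) auto
  ultimately have "0 \<le> m" "m \<le> 1"
    by (simp_all add: M.prob_space)
  then have h_bound: "\<bar>g x - m\<bar> \<le> 1" if "x \<in> space M" for x
    using g(2)[OF that] by auto
  have centered: "(\<integral>x. g x - m \<partial>M) = 0"
    using g_int by (simp add: m_def M.prob_space)
  define Y where "Y xs = (\<Sum>i<n. g (xs i) - m) / n" for xs
  have Y_measurable: "Y \<in> borel_measurable (iid n M)"
    unfolding Y_def using g(1) by measurable
  have Y_bound: "\<bar>Y xs\<bar> \<le> 1" if "xs \<in> space (iid n M)" for xs
  proof -
    have "(\<Sum>i<n. \<bar>g (xs i) - m\<bar>) \<le> real n"
      using that h_bound sum_mono[of "{..<n}" "\<lambda>i. \<bar>g (xs i) - m\<bar>" "\<lambda>_. 1"] by (auto simp: space_PiM)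
    then have "\<bar>\<Sum>i<n. g (xs i) - m\<bar> \<le> n"
      using sum_abs[of "\<lambda>i. g (xs i) - m" "{..<n}"] by linarith
    then show ?thesis
      using \<open>n > 0\<close> by (simp add: Y_def abs_divide divide_le_eq)
  qed
  have Y_int: "integrable (iid n M) Y"
    using Y_measurable Y_bound by (intro integrable_bounded_prob[OF P.prob_space_axioms])
  have Y_square_int: "integrable (iid n M) (\<lambda>xs. (Y xs)\<^sup>2)"
    using Y_measurable Y_bound power_mono[of "\<bar>Y _\<bar>" 1 2]
    by (intro integrable_bounded_prob[OF P.prob_space_axioms, where B=1]) auto
  have "(\<integral>xs. (Y xs)\<^sup>2 \<partial>iid n M) = (\<integral>xs. (\<Sum>i<n. g (xs i) - m)\<^sup>2 \<partial>iid n M) / n\<^sup>2"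
    by (simp add: Y_def power_divide)
  also have "\<dots> \<le> n / n\<^sup>2"
    using g(1) h_bound centered by (intro divide_right_mono integral_iid_sum_square_le[OF M]) auto
  also have "\<dots> = 1 / n"
    by (simp add: power2_eq_square)
  finally have "(\<integral>xs. \<bar>Y xs\<bar> \<partial>iid n M) \<le> sqrt (1 / n)"
    using \<open>n > 0\<close> by (intro integral_abs_le_sqrt_second_moment[OF P.prob_space_axioms Y_int Y_square_int]) auto
  moreover have "Y xs = (\<Sum>i<n. g (xs i)) / n - m" for xs
    using \<open>n > 0\<close> by (simp add: Y_def sum_subtractf field_simps)
  ultimately show ?thesis
    by (simp add: m_def real_sqrt_divide)
qed

lemma second_moment_method:
  fixes N :: "'a \<Rightarrow> real"
  assumes M: "prob_space M" and N: "integrable M N" "integrable M (\<lambda>x. (N x)\<^sup>2)"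
    and mean: "(\<integral>x. N x \<partial>M) = A" and second_moment: "(\<integral>x. (N x)\<^sup>2 \<partial>M) \<le> A + A\<^sup>2" and "A > 0"
    and Z: "Measurable.pred M Z" "\<And>x. Z x \<Longrightarrow> N x = 0"
  shows "(\<integral>x. of_bool (Z x) \<partial>M) \<le> 1 / A"
proof -
  interpret prob_space M by (rule M)
  have "(\<integral>x. (N x - A)\<^sup>2 \<partial>M) = (\<integral>x. (N x)\<^sup>2 \<partial>M) - 2 * A * (\<integral>x. N x \<partial>M) + A\<^sup>2"
    using N by (simp add: power2_diff prob_space)
  then have variance: "(\<integral>x. (N x - A)\<^sup>2 \<partial>M) \<le> A"
    using second_moment mean by (simp add: power2_eq_square)
  have "(\<integral>x. of_bool (Z x) \<partial>M) \<le> (\<integral>x. (N x - A)\<^sup>2 / A\<^sup>2 \<partial>M)"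
  proof (intro integral_mono)
    show "integrable M (\<lambda>x. of_bool (Z x) :: real)"
      using Z(1) by (intro integrable_bounded_prob[OF M, where B=1]) auto
    show "integrable M (\<lambda>x. (N x - A)\<^sup>2 / A\<^sup>2)"
      using N by (simp add: power2_diff)
    show "of_bool (Z x) \<le> (N x - A)\<^sup>2 / A\<^sup>2" for x
      using Z(2)[of x] \<open>A > 0\<close> by (cases "Z x") simp_all
  qed
  also have "\<dots> \<le> A / A\<^sup>2"
    using variance by (simp add: divide_right_mono)
  also have "\<dots> = 1 / A"
    using \<open>A > 0\<close> by (simp add: power2_eq_square)
  finally show ?thesis .
qed

section \<open>Empirical frequencies\<close>

definition frequency :: "nat \<Rightarrow> (nat \<Rightarrow> bool) \<Rightarrow> real" where
  "frequency n b = (\<Sum>i<n. of_bool (b i)) / n"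

lemma frequency_nonneg: "0 \<le> frequency n b"
  by (simp add: frequency_def sum_nonneg)

lemma frequency_le_1: "frequency n b \<le> 1"
proof -
  have "(\<Sum>i<n. of_bool (b i) :: real) \<le> (\<Sum>i<n. 1)"
    by (intro sum_mono) auto
  then show ?thesis by (simp add: frequency_def divide_le_eq)
qed

lemma frequency_mono: "(\<And>i. i < n \<Longrightarrow> b i \<Longrightarrow> c i) \<Longrightarrow> frequency n b \<le> frequency n c"
  unfolding frequency_def by (intro divide_right_mono sum_mono) auto

lemma frequency_cong: "(\<And>i. i < n \<Longrightarrow> b i = c i) \<Longrightarrow> frequency n b = frequency n c"
  unfolding frequency_def by (intro arg_cong2[where f="(/)"] sum.cong) auto

lemma borel_measurable_frequency:
  "(\<And>i. i < n \<Longrightarrow> Measurable.pred M (P i)) \<Longrightarrow> (\<lambda>x. frequency n (\<lambda>i. P i x)) \<in> borel_measurable M"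
  unfolding frequency_def by (intro borel_measurable_divide borel_measurable_sum) auto

lemma borel_measurable_iid_frequency:
  "Measurable.pred M P \<Longrightarrow> (\<lambda>xs. frequency n (\<lambda>i. P (xs i))) \<in> borel_measurable (iid n M)"
  by (rule borel_measurable_frequency) (rule measurable_iid_component)

lemma integrable_iid_frequency:
  "prob_space M \<Longrightarrow> Measurable.pred M P \<Longrightarrow> integrable (iid n M) (\<lambda>xs. frequency n (\<lambda>i. P (xs i)))"
  using frequency_nonneg frequency_le_1
  by (intro integrable_bounded_prob[OF prob_space_iid, where B=1] borel_measurable_iid_frequency) auto

lemma integrable_iid_frequency_deviation:
  assumes "prob_space M" "Measurable.pred M P" "0 \<le> p" "p \<le> 1"
  shows "integrable (iid n M) (\<lambda>xs. \<bar>frequency n (\<lambda>i. P (xs i)) - p\<bar>)"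
proof -
  have "\<bar>\<bar>frequency n b - p\<bar>\<bar> \<le> 1" for b
    using frequency_nonneg[of n b] frequency_le_1[of n b] assms(3,4) by auto
  then show ?thesis
    using assms(1,2) by (intro integrable_bounded_prob[OF prob_space_iid, where B=1] borel_measurable_abs
        borel_measurable_diff borel_measurable_iid_frequency) auto
qed

lemma integral_iid_frequency:
  assumes M: "prob_space M" and P: "Measurable.pred M P" and "n > 0"
  shows "(\<integral>xs. frequency n (\<lambda>i. P (xs i)) \<partial>iid n M) = (\<integral>x. of_bool (P x) \<partial>M)"
proof -
  interpret P: prob_space "iid n M" by (rule prob_space_iid[OF M])
  have "(\<integral>xs. (\<Sum>i<n. of_bool (P (xs i)) :: real) \<partial>iid n M) = (\<Sum>i<n. \<integral>xs. of_bool (P (xs i)) \<partial>iid n M)"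
    using P by (intro Bochner_Integration.integral_sum integrable_bounded_prob[OF P.prob_space_axioms, where B=1]) auto
  also have "\<dots> = (\<Sum>i<n. \<integral>x. of_bool (P x) \<partial>M)"
    using P by (intro sum.cong refl integral_iid_component[OF M, where g="\<lambda>x. of_bool (P x)"]) auto
  finally show ?thesis using \<open>n > 0\<close> by (simp add: frequency_def)
qed

lemma integral_iid_abs_frequency_deviation_le:
  assumes "prob_space M" "Measurable.pred M P" "n > 0"
  shows "(\<integral>xs. \<bar>frequency n (\<lambda>i. P (xs i)) - (\<integral>x. of_bool (P x) \<partial>M)\<bar> \<partial>iid n M) \<le> 1 / sqrt n"
  using integral_iid_abs_mean_deviation_le[OF assms(1), of "\<lambda>x. of_bool (P x)"] assms
  by (simp add: frequency_def)

definition sup_deviation :: "nat \<Rightarrow> (nat \<Rightarrow> real) \<Rightarrow> (nat \<Rightarrow> nat \<Rightarrow> bool) \<Rightarrow> real" where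
  "sup_deviation n p xs = (SUP j. \<bar>frequency n (\<lambda>i. xs i j) - p j\<bar>)"

lemma Delta_eq_sup_deviation:
  "Delta n \<mu> = (\<integral>xs. sup_deviation n (\<lambda>j. \<integral>x. of_bool (x j) \<partial>\<mu>) xs \<partial>iid n \<mu>)"
  by (simp add: Delta_def sup_deviation_def frequency_def)

lemma sup_deviation_le_bound:
  "(\<And>j. \<bar>frequency n (\<lambda>i. xs i j) - p j\<bar> \<le> B) \<Longrightarrow> sup_deviation n p xs \<le> B"
  unfolding sup_deviation_def by (rule cSUP_least) auto

context
  fixes p :: "nat \<Rightarrow> real"
  assumes p: "\<And>j. 0 \<le> p j \<and> p j \<le> 1"
begin

lemma deviation_le_1: "\<bar>frequency n b - p j\<bar> \<le> 1"
  using frequency_nonneg[of n b] frequency_le_1[of n b] p[of j] by auto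

lemma deviation_le_sup_deviation: "\<bar>frequency n (\<lambda>i. xs i j) - p j\<bar> \<le> sup_deviation n p xs"
  unfolding sup_deviation_def by (rule cSUP_upper) (auto intro!: bdd_aboveI[where M=1] deviation_le_1)

lemma sup_deviation_nonneg: "0 \<le> sup_deviation n p xs"
  using deviation_le_sup_deviation[of n xs 0] by linarith

lemma sup_deviation_le_1: "sup_deviation n p xs \<le> 1"
  by (rule sup_deviation_le_bound) (rule deviation_le_1)

lemma borel_measurable_sup_deviation:
  assumes "\<And>i j. i < n \<Longrightarrow> Measurable.pred M (\<lambda>x. X x i j)"
  shows "(\<lambda>x. sup_deviation n p (X x)) \<in> borel_measurable M"
  unfolding sup_deviation_def using assms
  by (intro borel_measurable_cSUP borel_measurable_abs borel_measurable_diff borel_measurable_frequency)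
     (auto intro!: bdd_aboveI[where M=1] deviation_le_1)

lemma integrable_sup_deviation:
  assumes "prob_space M" "\<And>i j. i < n \<Longrightarrow> Measurable.pred M (\<lambda>x. X x i j)"
  shows "integrable M (\<lambda>x. sup_deviation n p (X x))"
  using assms sup_deviation_nonneg sup_deviation_le_1
  by (intro integrable_bounded_prob[where B=1] borel_measurable_sup_deviation) auto

end

lemma sup_deviation_cong:
  assumes "\<And>i. i < n \<Longrightarrow> xs i = ys i"
  shows "sup_deviation n p xs = sup_deviation n p ys"
  unfolding sup_deviation_def using assms by (simp cong: frequency_cong)

lemma measurable_bitspace_coord [measurable]: "(\<lambda>x. x j) \<in> measurable bitspace (count_space UNIV)"
  unfolding bitspace_def by (rule measurable_component_singleton) simp

lemma measurable_bitspaceI: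
  "(\<And>j. Measurable.pred M (\<lambda>x. F x j)) \<Longrightarrow> F \<in> measurable M bitspace"
  unfolding bitspace_def by (auto simp: measurable_PiM_single' space_PiM)

lemma Delta_distr:
  assumes M: "prob_space M" and F: "F \<in> measurable M bitspace"
  shows "Delta n (distr M bitspace F) =
    (\<integral>w. sup_deviation n (\<lambda>j. \<integral>x. of_bool (F x j) \<partial>M) (\<lambda>i. F (w i)) \<partial>iid n M)"
proof -
  define \<nu> where "\<nu> = distr M bitspace F"
  define p :: "nat \<Rightarrow> real" where "p = (\<lambda>j. \<integral>x. of_bool (F x j) \<partial>M)"
  have \<nu>: "prob_space \<nu>"
    unfolding \<nu>_def by (rule prob_space.prob_space_distr[OF M F])
  have sets_\<nu>: "sets \<nu> = sets bitspace"
    by (simp add: \<nu>_def)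
  have F_\<nu>: "F \<in> measurable M \<nu>"
    using F by (simp add: measurable_cong_sets[OF refl sets_\<nu>])
  have coord_\<nu>: "Measurable.pred \<nu> (\<lambda>x. x j)" for j
    by (simp add: measurable_cong_sets[OF sets_\<nu> refl])
  have p_eq: "(\<integral>x. of_bool (x j) \<partial>\<nu>) = p j" for j
    unfolding \<nu>_def p_def using integral_distr[OF F, of "\<lambda>x. of_bool (x j) :: real"] by simp
  have p: "0 \<le> p j \<and> p j \<le> 1" for j
  proof -
    interpret prob_space M by (rule M)
    have "Measurable.pred M (\<lambda>x. F x j)"
      using measurable_compose[OF F_\<nu> coord_\<nu>] .
    then have "p j \<le> (\<integral>x. 1 \<partial>M)"
      unfolding p_def by (intro integral_mono integrable_bounded_prob[OF M, where B=1]) auto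
    moreover have "0 \<le> p j"
      unfolding p_def by (intro integral_nonneg_AE) auto
    ultimately show ?thesis by (simp add: prob_space)
  qed
  have "iid n \<nu> = PiM {..<n} (\<lambda>_. distr M \<nu> F)"
    by (intro PiM_cong refl) (simp add: \<nu>_def cong: distr_cong)
  also have "\<dots> = distr (iid n M) (iid n \<nu>) (compose {..<n} F)"
    using M \<nu> F_\<nu> by (intro distr_PiM_finite_prob_space'[symmetric]) auto
  finally have iid_\<nu>: "iid n \<nu> = distr (iid n M) (iid n \<nu>) (compose {..<n} F)" .
  have compose_measurable: "compose {..<n} F \<in> measurable (iid n M) (iid n \<nu>)"
    unfolding compose_def using F_\<nu> by (intro measurable_restrict measurable_iid_component) auto
  have "Delta n \<nu> = (\<integral>xs. sup_deviation n p xs \<partial>iid n \<nu>)"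
    by (simp add: Delta_eq_sup_deviation p_eq)
  also have "\<dots> = (\<integral>w. sup_deviation n p (compose {..<n} F w) \<partial>iid n M)"
    using p coord_\<nu> by (subst iid_\<nu>)
      (intro integral_distr compose_measurable borel_measurable_sup_deviation measurable_iid_component)
  also have "\<dots> = (\<integral>w. sup_deviation n p (\<lambda>i. F (w i)) \<partial>iid n M)"
    by (intro Bochner_Integration.integral_cong refl sup_deviation_cong) (simp add: compose_def)
  finally show ?thesis by (simp add: \<nu>_def p_def)
qed

section \<open>Independent coins\<close>

definition bernoulli_family :: "('i \<Rightarrow> real) \<Rightarrow> ('i \<Rightarrow> bool) measure" where
  "bernoulli_family r = PiM UNIV (\<lambda>t. measure_pmf (bernoulli_pmf (r t)))"

lemma prob_space_bernoulli_family: "prob_space (bernoulli_family r)"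
  unfolding bernoulli_family_def by (intro prob_space_PiM prob_space_measure_pmf)

lemma space_bernoulli_family [simp]: "space (bernoulli_family r) = UNIV"
  by (simp add: bernoulli_family_def space_PiM)

lemma measurable_bernoulli_family_coord [measurable]:
  "(\<lambda>\<omega>. \<omega> t) \<in> measurable (bernoulli_family r) (count_space UNIV)"
proof -
  have "(\<lambda>\<omega>. \<omega> t) \<in> measurable (bernoulli_family r) (measure_pmf (bernoulli_pmf (r t)))"
    unfolding bernoulli_family_def by (rule measurable_component_singleton) simp
  then show ?thesis by (simp add: measurable_def)
qed

definition cylinder :: "'i set \<Rightarrow> 'i set \<Rightarrow> ('i \<Rightarrow> bool) set" where
  "cylinder P Q = {\<omega>. (\<forall>t\<in>P. \<omega> t) \<and> (\<forall>t\<in>Q. \<not> \<omega> t)}"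

lemma measure_bernoulli_family_cylinder:
  assumes "finite P" "finite Q" "P \<inter> Q = {}" and r: "\<And>t. t \<in> P \<union> Q \<Longrightarrow> 0 \<le> r t \<and> r t \<le> 1"
  shows "measure (bernoulli_family r) (cylinder P Q) = (\<Prod>t\<in>P. r t) * (\<Prod>t\<in>Q. 1 - r t)"
proof -
  let ?M = "\<lambda>t. measure_pmf (bernoulli_pmf (r t))"
  interpret product_prob_space ?M UNIV
    by (intro product_prob_spaceI prob_space_measure_pmf)
  define X where "X t = (if t \<in> P then {True} else {False})" for t
  have "cylinder P Q = prod_emb UNIV ?M (P \<union> Q) (Pi\<^sub>E (P \<union> Q) X)"
    using \<open>P \<inter> Q = {}\<close>
    by (auto simp: cylinder_def prod_emb_def space_PiM Pi_iff X_def disjoint_iff split: if_splits)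
  then have "emeasure (bernoulli_family r) (cylinder P Q) = (\<Prod>t\<in>P \<union> Q. emeasure (?M t) (X t))"
    unfolding bernoulli_family_def using assms by (simp add: emeasure_PiM_emb)
  also have "\<dots> = (\<Prod>t\<in>P \<union> Q. ennreal (if t \<in> P then r t else 1 - r t))"
    using r by (intro prod.cong refl) (auto simp: X_def emeasure_pmf_single)
  also have "\<dots> = ennreal (\<Prod>t\<in>P \<union> Q. if t \<in> P then r t else 1 - r t)"
    using r by (intro prod_ennreal) auto
  also have "(\<Prod>t\<in>P \<union> Q. if t \<in> P then r t else 1 - r t) =
      (\<Prod>t\<in>P. if t \<in> P then r t else 1 - r t) * (\<Prod>t\<in>Q. if t \<in> P then r t else 1 - r t)"
    using assms by (intro prod.union_disjoint)
  also have "\<dots> = (\<Prod>t\<in>P. r t) * (\<Prod>t\<in>Q. 1 - r t)"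
    using \<open>P \<inter> Q = {}\<close> by (intro arg_cong2[where f="(*)"] prod.cong) auto
  finally show ?thesis
    using r by (simp add: measure_def prod_nonneg)
qed

lemma sets_bernoulli_family_cylinder:
  assumes "finite P" "finite Q"
  shows "cylinder P Q \<in> sets (bernoulli_family r)"
proof -
  have "Measurable.pred (bernoulli_family r) (\<lambda>\<omega>. (\<forall>t\<in>P. \<omega> t) \<and> (\<forall>t\<in>Q. \<not> \<omega> t))"
    using assms by measurable
  then show ?thesis by (simp add: pred_def cylinder_def)
qed

lemma integrable_bernoulli_family_cylinder [simp]:
  "finite P \<Longrightarrow> finite Q \<Longrightarrow> integrable (bernoulli_family r) (indicator (cylinder P Q) :: _ \<Rightarrow> real)"
  by (intro integrable_bounded_prob[OF prob_space_bernoulli_family, where B=1]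
      borel_measurable_indicator sets_bernoulli_family_cylinder) auto

lemma integral_bernoulli_family_pair:
  assumes "r a = q" "r b = q" "0 \<le> q" "q \<le> 1"
  shows "(\<integral>\<omega>. of_bool (\<omega> a \<and> \<omega> b) \<partial>bernoulli_family r) = (if a = b then q else q\<^sup>2)"
proof -
  have "(\<lambda>\<omega>. of_bool (\<omega> a \<and> \<omega> b) :: real) = indicator (cylinder {a, b} {})"
    by (auto simp: cylinder_def fun_eq_iff)
  moreover have "measure (bernoulli_family r) (cylinder {a, b} {}) = (\<Prod>s\<in>{a, b}. r s)"
    using assms by (subst measure_bernoulli_family_cylinder) auto
  ultimately show ?thesis
    using assms by (cases "a = b") (auto simp: power2_eq_square)
qed

lemma integral_no_full_column_le:
  fixes t :: "nat \<Rightarrow> 'i" and r :: "'i \<Rightarrow> real"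
  assumes t: "inj_on t {..<m}" and "m > 0" and q: "0 < q" "q \<le> 1" and r: "\<And>k. k < m \<Longrightarrow> r (t k) = q"
  shows "(\<integral>w. of_bool (\<not> (\<exists>k<m. \<forall>i<n. w i (t k))) \<partial>iid n (bernoulli_family r)) \<le> 1 / (m * q ^ n)"
proof -
  let ?B = "bernoulli_family r"
  let ?P = "iid n ?B"
  define h :: "nat \<Rightarrow> nat \<Rightarrow> ('i \<Rightarrow> bool) \<Rightarrow> real"
    where "h k l \<omega> = of_bool (\<omega> (t k) \<and> \<omega> (t l))" for k l \<omega>
  have h_int: "integrable ?B (h k l)" for k l
    unfolding h_def by (intro integrable_bounded_prob[OF prob_space_bernoulli_family, where B=1]) auto
  have h_integral: "(\<integral>\<omega>. h k l \<omega> \<partial>?B) = (if k = l then q else q\<^sup>2)" if "k < m" "l < m" for k l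
    using integral_bernoulli_family_pair[where r=r and a="t k" and b="t l", OF r[OF that(1)] r[OF that(2)]] q
      inj_on_eq_iff[OF t] that by (simp add: h_def)
  have column_integral: "(\<integral>w. (\<Prod>i<n. h k l (w i)) \<partial>?P) = (if k = l then q else q\<^sup>2) ^ n"
    if "k < m" "l < m" for k l
    using h_int h_integral[OF that] by (simp add: integral_iid_prod[OF prob_space_bernoulli_family])
  have column_int: "integrable ?P (\<lambda>w. \<Prod>i<n. h k l (w i))" for k l
    using h_int by (rule integrable_iid_prod[OF prob_space_bernoulli_family])
  define N where "N w = (\<Sum>k<m. \<Prod>i<n. h k k (w i))" for w
  have N_square: "(N w)\<^sup>2 = (\<Sum>k<m. \<Sum>l<m. \<Prod>i<n. h k l (w i))" for w
    unfolding N_def power2_eq_square sum_product prod.distrib[symmetric] by (simp add: h_def of_bool_conj)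
  have "(\<integral>w. N w \<partial>?P) = (\<Sum>k<m. \<integral>w. (\<Prod>i<n. h k k (w i)) \<partial>?P)"
    unfolding N_def using column_int by (rule Bochner_Integration.integral_sum)
  then have N_mean: "(\<integral>w. N w \<partial>?P) = m * q ^ n"
    by (simp add: column_integral)
  have "(\<integral>w. (N w)\<^sup>2 \<partial>?P) = (\<Sum>k<m. \<Sum>l<m. \<integral>w. (\<Prod>i<n. h k l (w i)) \<partial>?P)"
    unfolding N_square using column_int
    by (subst Bochner_Integration.integral_sum)
      (auto intro!: Bochner_Integration.integrable_sum sum.cong Bochner_Integration.integral_sum)
  also have "\<dots> = (\<Sum>k<m. \<Sum>l<m. (if k = l then q else q\<^sup>2) ^ n)"
    by (simp add: column_integral)
  also have "\<dots> \<le> (\<Sum>k<m. \<Sum>l<m. of_bool (k = l) * q ^ n + q ^ n * q ^ n)"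
    using q by (intro sum_mono) (auto simp: power_mult_distrib power2_eq_square)
  also have "\<dots> = m * q ^ n + (m * q ^ n)\<^sup>2"
    by (simp add: sum.distrib power2_eq_square algebra_simps)
  finally have N_second_moment: "(\<integral>w. (N w)\<^sup>2 \<partial>?P) \<le> m * q ^ n + (m * q ^ n)\<^sup>2" .
  show ?thesis
  proof (rule second_moment_method[OF prob_space_iid[OF prob_space_bernoulli_family] _ _ N_mean N_second_moment])
    show "integrable ?P N"
      unfolding N_def using column_int by (rule Bochner_Integration.integrable_sum)
    show "integrable ?P (\<lambda>w. (N w)\<^sup>2)"
      unfolding N_square using column_int by (intro Bochner_Integration.integrable_sum)
    show "N w = 0" if "\<not> (\<exists>k<m. \<forall>i<n. w i (t k))" for w
      using that unfolding N_def h_def by (intro sum.neutral ballI) (auto simp: prod_zero_iff)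
  qed (use \<open>m > 0\<close> q in auto)
qed

section \<open>The two measures\<close>

datatype coin = Global | Cluster nat | Local nat nat

definition level :: "nat \<Rightarrow> real" where
  "level c = 1 / 2 ^ (c + 2)"

definition width :: "nat \<Rightarrow> nat" where
  "width c = (c + 1) * 2 ^ (c * (c + 2))"

definition cluster :: "nat \<Rightarrow> nat" where
  "cluster j = fst (prod_decode j)"

definition slot :: "nat \<Rightarrow> nat" where
  "slot j = snd (prod_decode j)"

definition active :: "nat \<Rightarrow> bool" where
  "active j \<longleftrightarrow> slot j < width (cluster j)"

definition nu_prob :: "coin \<Rightarrow> real" where
  "nu_prob t = (case t of Global \<Rightarrow> 1/2 | Cluster c \<Rightarrow> level c | Local c k \<Rightarrow> level c)"

definition nu_coord :: "(coin \<Rightarrow> bool) \<Rightarrow> nat \<Rightarrow> bool" where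
  "nu_coord \<omega> j \<longleftrightarrow>
    active j \<and> \<omega> Global \<and> (\<omega> (Cluster (cluster j)) \<or> \<omega> (Local (cluster j) (slot j)))"

text \<open>\<open>hit_prob c\<close> and \<open>double_hit_prob c\<close> are the probabilities under \<open>nu\<close> that
  \<open>Cluster c \<or> Local c k\<close> holds for one slot, respectively for two distinct slots, of cluster \<open>c\<close>.
  The biases \<open>(mu_cluster_prob c, mu_local_prob c)\<close> are the solution \<open>(d, x)\<close> of
  \<open>d * x = hit_prob c\<close> and \<open>d * x\<^sup>2 = double_hit_prob c\<close>.\<close>

definition hit_prob :: "nat \<Rightarrow> real" where
  "hit_prob c = 2 * level c - (level c)\<^sup>2"

definition double_hit_prob :: "nat \<Rightarrow> real" where
  "double_hit_prob c = level c + (level c)\<^sup>2 - level c ^ 3"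

definition mu_cluster_prob :: "nat \<Rightarrow> real" where
  "mu_cluster_prob c = level c * (2 - level c)\<^sup>2 / (1 + level c - (level c)\<^sup>2)"

definition mu_local_prob :: "nat \<Rightarrow> real" where
  "mu_local_prob c = (1 + level c - (level c)\<^sup>2) / (2 - level c)"

definition mu_prob :: "coin \<Rightarrow> real" where
  "mu_prob t = (case t of Global \<Rightarrow> 1/2 | Cluster c \<Rightarrow> mu_cluster_prob c | Local c k \<Rightarrow> mu_local_prob c)"

definition mu_coord :: "(coin \<Rightarrow> bool) \<Rightarrow> nat \<Rightarrow> bool" where
  "mu_coord \<omega> j \<longleftrightarrow>
    active j \<and> \<omega> Global \<and> \<omega> (Cluster (cluster j)) \<and> \<omega> (Local (cluster j) (slot j))"

definition nu :: "(nat \<Rightarrow> bool) measure" where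
  "nu = distr (bernoulli_family nu_prob) bitspace nu_coord"

definition mu :: "(nat \<Rightarrow> bool) measure" where
  "mu = distr (bernoulli_family mu_prob) bitspace mu_coord"

definition gram :: "nat \<Rightarrow> nat \<Rightarrow> real" where
  "gram i j =
    (if active i \<and> active j then
      (if i = j then hit_prob (cluster i)
       else if cluster i = cluster j then double_hit_prob (cluster i)
       else hit_prob (cluster i) * hit_prob (cluster j)) / 2
     else 0)"

lemma cluster_prod_encode [simp]: "cluster (prod_encode (c, k)) = c"
  by (simp add: cluster_def)

lemma slot_prod_encode [simp]: "slot (prod_encode (c, k)) = k"
  by (simp add: slot_def)

lemma slot_neq_if_cluster_eq: "i \<noteq> j \<Longrightarrow> cluster i = cluster j \<Longrightarrow> slot i \<noteq> slot j"
  unfolding cluster_def slot_def by (metis prod.collapse prod_decode_inverse)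

lemma nu_prob_simps [simp]:
  "nu_prob Global = 1/2" "nu_prob (Cluster c) = level c" "nu_prob (Local c k) = level c"
  by (simp_all add: nu_prob_def)

lemma mu_prob_simps [simp]:
  "mu_prob Global = 1/2" "mu_prob (Cluster c) = mu_cluster_prob c" "mu_prob (Local c k) = mu_local_prob c"
  by (simp_all add: mu_prob_def)

lemma level_pos: "0 < level c"
  by (simp add: level_def)

lemma level_le: "level c \<le> 1/4"
  using one_le_power[of "2::real" c] by (simp add: level_def power_add divide_le_eq)

lemma level_le_1: "level c \<le> 1"
  using level_le[of c] by simp

lemma level_antimono: "c \<le> c' \<Longrightarrow> level c' \<le> level c"
  unfolding level_def by (intro divide_left_mono power_increasing) auto

lemma level_add: "level (c + C) = level C / 2 ^ c"
  by (simp add: level_def power_add)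

lemma width_level_power: "width c * level c ^ c = c + 1"
proof -
  have "level c ^ c = 1 / 2 ^ ((c + 2) * c)"
    unfolding level_def power_one_over power_mult ..
  moreover have "real (width c) = (c + 1) * 2 ^ ((c + 2) * c)"
    by (simp add: width_def mult.commute)
  ultimately show ?thesis by (simp add: field_simps)
qed

lemma hit_prob_bounds: "0 \<le> hit_prob c \<and> hit_prob c \<le> 2 * level c"
  using level_pos[of c] level_le[of c] by (simp add: hit_prob_def power2_eq_square mult_le_cancel_right1)

context
  fixes L :: real
  assumes L: "0 < L" "L \<le> 1/4"
begin

lemma mu_params_bounds:
  "0 \<le> (1 + L - L\<^sup>2) / (2 - L)" "(1 + L - L\<^sup>2) / (2 - L) \<le> 1"
  "0 \<le> L * (2 - L)\<^sup>2 / (1 + L - L\<^sup>2)" "L * (2 - L)\<^sup>2 / (1 + L - L\<^sup>2) \<le> 4 * L"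
proof -
  have "L\<^sup>2 \<le> L" using L by (simp add: power2_eq_square mult_le_cancel_right1)
  then have den: "1 \<le> 1 + L - L\<^sup>2" by simp
  have "1 + L - L\<^sup>2 \<le> 2 - L"
    using zero_le_power2[of "1 - L"] by (simp add: power2_eq_square algebra_simps)
  then show "0 \<le> (1 + L - L\<^sup>2) / (2 - L)" "(1 + L - L\<^sup>2) / (2 - L) \<le> 1"
    using den L by simp_all
  show "0 \<le> L * (2 - L)\<^sup>2 / (1 + L - L\<^sup>2)"
    using den L by (intro divide_nonneg_pos mult_nonneg_nonneg) auto
  have "L * (2 - L)\<^sup>2 / (1 + L - L\<^sup>2) \<le> L * (2 - L)\<^sup>2"
    using divide_left_mono[OF den, of "L * (2 - L)\<^sup>2"] den L by simp
  also have "\<dots> \<le> L * 2\<^sup>2"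
    using L by (intro mult_left_mono power_mono) auto
  finally show "L * (2 - L)\<^sup>2 / (1 + L - L\<^sup>2) \<le> 4 * L" by simp
qed

lemma mu_params_moments:
  "L * (2 - L)\<^sup>2 / (1 + L - L\<^sup>2) * ((1 + L - L\<^sup>2) / (2 - L)) = 2 * L - L\<^sup>2"
  "L * (2 - L)\<^sup>2 / (1 + L - L\<^sup>2) * ((1 + L - L\<^sup>2) / (2 - L))\<^sup>2 = L + L\<^sup>2 - L ^ 3"
proof -
  have "L\<^sup>2 \<le> L" using L by (simp add: power2_eq_square mult_le_cancel_right1)
  then have a: "1 + L - L\<^sup>2 \<noteq> 0" and b: "2 - L \<noteq> 0"
    using L by auto
  have "L * b\<^sup>2 / a * (a / b) = L * b" "L * b\<^sup>2 / a * (a / b)\<^sup>2 = L * a"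
    if "a \<noteq> 0" "b \<noteq> 0" for a b :: real
    using that by (simp_all add: power2_eq_square)
  from this[OF a b] show
    "L * (2 - L)\<^sup>2 / (1 + L - L\<^sup>2) * ((1 + L - L\<^sup>2) / (2 - L)) = 2 * L - L\<^sup>2"
    "L * (2 - L)\<^sup>2 / (1 + L - L\<^sup>2) * ((1 + L - L\<^sup>2) / (2 - L))\<^sup>2 = L + L\<^sup>2 - L ^ 3"
    by (simp_all add: algebra_simps power2_eq_square power3_eq_cube)
qed

end

lemma mu_cluster_prob_bounds: "0 \<le> mu_cluster_prob c \<and> mu_cluster_prob c \<le> 4 * level c"
  using mu_params_bounds[OF level_pos level_le] by (simp add: mu_cluster_prob_def)

lemma mu_local_prob_bounds: "0 \<le> mu_local_prob c \<and> mu_local_prob c \<le> 1"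
  using mu_params_bounds[OF level_pos level_le] by (simp add: mu_local_prob_def)

lemma mu_prob_moments:
  "mu_cluster_prob c * mu_local_prob c = hit_prob c"
  "mu_cluster_prob c * (mu_local_prob c)\<^sup>2 = double_hit_prob c"
  using mu_params_moments[OF level_pos level_le]
  by (simp_all add: mu_cluster_prob_def mu_local_prob_def hit_prob_def double_hit_prob_def)

lemma nu_prob_bounds: "0 \<le> nu_prob t \<and> nu_prob t \<le> 1"
  using level_pos level_le_1 by (cases t) (auto simp: nu_prob_def less_imp_le)

lemma mu_prob_bounds: "0 \<le> mu_prob t \<and> mu_prob t \<le> 1"
proof -
  have "mu_cluster_prob c \<le> 1" for c
    using mu_cluster_prob_bounds[of c] level_le[of c] by simp
  then show ?thesis
    using mu_cluster_prob_bounds mu_local_prob_bounds by (cases t) (auto simp: mu_prob_def)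
qed

lemma measurable_nu_coord [measurable]: "Measurable.pred (bernoulli_family r) (\<lambda>\<omega>. nu_coord \<omega> j)"
  unfolding nu_coord_def by measurable

lemma measurable_mu_coord [measurable]: "Measurable.pred (bernoulli_family r) (\<lambda>\<omega>. mu_coord \<omega> j)"
  unfolding mu_coord_def by measurable

section \<open>Equal second moments\<close>

lemma coord_pair_cases:
  obtains (inactive) "\<not> (active i \<and> active j)"
  | (diagonal) "active i" "i = j"
  | (same_cluster) "active i" "active j" "i \<noteq> j" "cluster i = cluster j" "slot i \<noteq> slot j"
  | (other_cluster) "active i" "active j" "i \<noteq> j" "cluster i \<noteq> cluster j"
  using slot_neq_if_cluster_eq by blast

lemma integral_nu_coord_pair:
  "(\<integral>\<omega>. of_bool (nu_coord \<omega> i) * of_bool (nu_coord \<omega> j) \<partial>bernoulli_family nu_prob) = gram i j"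
proof (cases i j rule: coord_pair_cases)
  case inactive
  then show ?thesis by (auto simp: nu_coord_def gram_def)
next
  case diagonal
  define c k where "c = cluster i" "k = slot i"
  have "(\<lambda>\<omega>. of_bool (nu_coord \<omega> i) * of_bool (nu_coord \<omega> j) :: real) =
      (\<lambda>\<omega>. indicator (cylinder {Global} {}) \<omega> - indicator (cylinder {Global} {Cluster c, Local c k}) \<omega>)"
    using diagonal by (auto simp: fun_eq_iff nu_coord_def cylinder_def indicator_def c_k_def)
  then show ?thesis
    using diagonal
    by (simp add: measure_bernoulli_family_cylinder nu_prob_bounds gram_def hit_prob_def c_k_def
        power2_eq_square algebra_simps)
next
  case same_cluster
  define c k k' where "c = cluster i" "k = slot i" "k' = slot j"
  have "(\<lambda>\<omega>. of_bool (nu_coord \<omega> i) * of_bool (nu_coord \<omega> j) :: real) =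
      (\<lambda>\<omega>. indicator (cylinder {Global, Cluster c} {}) \<omega> +
        indicator (cylinder {Global, Local c k, Local c k'} {Cluster c}) \<omega>)"
    using same_cluster by (auto simp: fun_eq_iff nu_coord_def cylinder_def indicator_def c_k_k'_def)
  then show ?thesis
    using same_cluster
    by (simp add: measure_bernoulli_family_cylinder nu_prob_bounds gram_def double_hit_prob_def
        c_k_k'_def power2_eq_square power3_eq_cube field_simps)
next
  case other_cluster
  define c k c' k' where "c = cluster i" "k = slot i" "c' = cluster j" "k' = slot j"
  have "(\<lambda>\<omega>. of_bool (nu_coord \<omega> i) * of_bool (nu_coord \<omega> j) :: real) =
      (\<lambda>\<omega>. indicator (cylinder {Global} {}) \<omega> - indicator (cylinder {Global} {Cluster c, Local c k}) \<omega>
        - indicator (cylinder {Global} {Cluster c', Local c' k'}) \<omega>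
        + indicator (cylinder {Global} {Cluster c, Local c k, Cluster c', Local c' k'}) \<omega>)"
    using other_cluster by (auto simp: fun_eq_iff nu_coord_def cylinder_def indicator_def c_k_c'_k'_def)
  then show ?thesis
    using other_cluster
    by (simp add: measure_bernoulli_family_cylinder nu_prob_bounds gram_def hit_prob_def
        c_k_c'_k'_def power2_eq_square algebra_simps)
qed

lemma integral_mu_coord_pair:
  "(\<integral>\<omega>. of_bool (mu_coord \<omega> i) * of_bool (mu_coord \<omega> j) \<partial>bernoulli_family mu_prob) = gram i j"
proof (cases i j rule: coord_pair_cases)
  case inactive
  then show ?thesis by (auto simp: mu_coord_def gram_def)
next
  case diagonal
  define c k where "c = cluster i" "k = slot i"
  have "(\<lambda>\<omega>. of_bool (mu_coord \<omega> i) * of_bool (mu_coord \<omega> j) :: real) =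
      indicator (cylinder {Global, Cluster c, Local c k} {})"
    using diagonal by (auto simp: fun_eq_iff mu_coord_def cylinder_def indicator_def c_k_def)
  then show ?thesis
    using diagonal mu_prob_moments(1)[of c]
    by (simp add: measure_bernoulli_family_cylinder mu_prob_bounds gram_def c_k_def)
next
  case same_cluster
  define c k k' where "c = cluster i" "k = slot i" "k' = slot j"
  have "(\<lambda>\<omega>. of_bool (mu_coord \<omega> i) * of_bool (mu_coord \<omega> j) :: real) =
      indicator (cylinder {Global, Cluster c, Local c k, Local c k'} {})"
    using same_cluster by (auto simp: fun_eq_iff mu_coord_def cylinder_def indicator_def c_k_k'_def)
  then show ?thesis
    using same_cluster mu_prob_moments(2)[of c]
    by (simp add: measure_bernoulli_family_cylinder mu_prob_bounds gram_def c_k_k'_def power2_eq_square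
        mult.assoc)
next
  case other_cluster
  define c k c' k' where "c = cluster i" "k = slot i" "c' = cluster j" "k' = slot j"
  have "(\<lambda>\<omega>. of_bool (mu_coord \<omega> i) * of_bool (mu_coord \<omega> j) :: real) =
      indicator (cylinder {Global, Cluster c, Local c k, Cluster c', Local c' k'} {})"
    using other_cluster by (auto simp: fun_eq_iff mu_coord_def cylinder_def indicator_def c_k_c'_k'_def)
  then show ?thesis
    using other_cluster mu_prob_moments(1)[of c] mu_prob_moments(1)[of c']
    by (simp add: measure_bernoulli_family_cylinder mu_prob_bounds gram_def c_k_c'_k'_def mult_ac)
qed

lemma integral_nu_pair: "(\<integral>x. of_bool (x i) * of_bool (x j) \<partial>nu) = gram i j"
  unfolding nu_def integral_nu_coord_pair[symmetric]
  by (intro integral_distr measurable_bitspaceI measurable_nu_coord) simp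

lemma integral_mu_pair: "(\<integral>x. of_bool (x i) * of_bool (x j) \<partial>mu) = gram i j"
  unfolding mu_def integral_mu_coord_pair[symmetric]
  by (intro integral_distr measurable_bitspaceI measurable_mu_coord) simp

lemma gram_diag: "gram j j = (if active j then hit_prob (cluster j) / 2 else 0)"
  by (simp add: gram_def)

lemma gram_diag_bounds: "0 \<le> gram j j \<and> gram j j \<le> level (cluster j)"
  using hit_prob_bounds[of "cluster j"] by (simp add: gram_diag)

lemma gram_diag_le_1: "0 \<le> gram j j \<and> gram j j \<le> 1"
  using gram_diag_bounds[of j] level_le_1[of "cluster j"] by auto

lemma integral_nu_coord: "(\<integral>\<omega>. of_bool (nu_coord \<omega> j) \<partial>bernoulli_family nu_prob) = gram j j"
  using integral_nu_coord_pair[of j j] by (simp flip: of_bool_conj)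

lemma integral_mu_coord: "(\<integral>\<omega>. of_bool (mu_coord \<omega> j) \<partial>bernoulli_family mu_prob) = gram j j"
  using integral_mu_coord_pair[of j j] by (simp flip: of_bool_conj)

section \<open>Empirical deviations under \<open>nu\<close>\<close>

lemma Delta_nu:
  "Delta n nu = (\<integral>w. sup_deviation n (\<lambda>j. gram j j) (\<lambda>i. nu_coord (w i)) \<partial>iid n (bernoulli_family nu_prob))"
  unfolding nu_def integral_nu_coord[symmetric]
  by (intro Delta_distr prob_space_bernoulli_family measurable_bitspaceI measurable_nu_coord)

lemma integral_nu_Global: "(\<integral>\<omega>. of_bool (\<omega> Global) \<partial>bernoulli_family nu_prob) = (1/2 :: real)"
proof -
  have "(\<lambda>\<omega>. of_bool (\<omega> Global) :: real) = indicator (cylinder {Global} {})"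
    by (auto simp: fun_eq_iff cylinder_def indicator_def)
  then show ?thesis by (simp add: measure_bernoulli_family_cylinder nu_prob_bounds)
qed

lemma sup_deviation_nu_le:
  "sup_deviation n (\<lambda>j. gram j j) (\<lambda>i. nu_coord (w i)) \<le> 1/2 + \<bar>frequency n (\<lambda>i. w i Global) - 1/2\<bar>"
proof (rule sup_deviation_le_bound)
  fix j
  have "frequency n (\<lambda>i. nu_coord (w i) j) \<le> frequency n (\<lambda>i. w i Global)"
    by (intro frequency_mono) (simp add: nu_coord_def)
  moreover have "gram j j \<le> 1/2"
    using gram_diag_bounds[of j] level_le[of "cluster j"] by simp
  ultimately show "\<bar>frequency n (\<lambda>i. nu_coord (w i) j) - gram j j\<bar> \<le> 1/2 + \<bar>frequency n (\<lambda>i. w i Global) - 1/2\<bar>"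
    using frequency_nonneg[of n "\<lambda>i. nu_coord (w i) j"] gram_diag_bounds[of j] by linarith
qed

lemma sup_deviation_nu_ge:
  "frequency n (\<lambda>i. w i Global) - level n - of_bool (\<not> (\<exists>k<width n. \<forall>i<n. w i (Local n k)))
    \<le> sup_deviation n (\<lambda>j. gram j j) (\<lambda>i. nu_coord (w i))"
proof (cases "\<exists>k<width n. \<forall>i<n. w i (Local n k)")
  case True
  then obtain k where k: "k < width n" "\<forall>i<n. w i (Local n k)"
    by blast
  define j where "j = prod_encode (n, k)"
  have "frequency n (\<lambda>i. nu_coord (w i) j) = frequency n (\<lambda>i. w i Global)"
    using k by (intro frequency_cong) (auto simp: nu_coord_def active_def j_def)
  then have "\<bar>frequency n (\<lambda>i. w i Global) - gram j j\<bar> \<le> sup_deviation n (\<lambda>j. gram j j) (\<lambda>i. nu_coord (w i))"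
    using deviation_le_sup_deviation[OF gram_diag_le_1, of n "\<lambda>i. nu_coord (w i)" j] by simp
  moreover have "gram j j \<le> level n"
    using gram_diag_bounds[of j] by (simp add: j_def)
  ultimately show ?thesis using True by simp
next
  case False
  then show ?thesis
    using frequency_le_1[of n "\<lambda>i. w i Global"] level_pos[of n]
      sup_deviation_nonneg[where p="\<lambda>j. gram j j", OF gram_diag_le_1, of n "\<lambda>i. nu_coord (w i)"]
    by simp
qed

lemma Delta_nu_le:
  assumes "n > 0"
  shows "Delta n nu \<le> 1/2 + 1 / sqrt n"
proof -
  let ?P = "iid n (bernoulli_family nu_prob)"
  interpret P: prob_space ?P by (rule prob_space_iid[OF prob_space_bernoulli_family])
  have Global_dev_int: "integrable ?P (\<lambda>w. \<bar>frequency n (\<lambda>i. w i Global) - 1/2\<bar>)"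
    by (intro integrable_iid_frequency_deviation prob_space_bernoulli_family) auto
  have "Delta n nu \<le> (\<integral>w. 1/2 + \<bar>frequency n (\<lambda>i. w i Global) - 1/2\<bar> \<partial>?P)"
    unfolding Delta_nu using Global_dev_int gram_diag_le_1
    by (intro integral_mono sup_deviation_nu_le integrable_sup_deviation P.prob_space_axioms
        measurable_iid_component) auto
  also have "\<dots> = 1/2 + (\<integral>w. \<bar>frequency n (\<lambda>i. w i Global) - 1/2\<bar> \<partial>?P)"
    using Global_dev_int by (simp add: P.prob_space)
  also have "(\<integral>w. \<bar>frequency n (\<lambda>i. w i Global) - 1/2\<bar> \<partial>?P) \<le> 1 / sqrt n"
    using integral_iid_abs_frequency_deviation_le[OF prob_space_bernoulli_family[of nu_prob],
        where P="\<lambda>\<omega>. \<omega> Global" and n=n] \<open>n > 0\<close>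
    by (simp add: integral_nu_Global)
  finally show ?thesis by simp
qed

lemma Delta_nu_ge:
  assumes "n > 0"
  shows "1/2 - level n - 1 / (real n + 1) \<le> Delta n nu"
proof -
  let ?P = "iid n (bernoulli_family nu_prob)"
  interpret P: prob_space ?P by (rule prob_space_iid[OF prob_space_bernoulli_family])
  define full where "full w \<longleftrightarrow> (\<exists>k<width n. \<forall>i<n. w i (Local n k))" for w :: "nat \<Rightarrow> coin \<Rightarrow> bool"
  have Global_int: "integrable ?P (\<lambda>w. frequency n (\<lambda>i. w i Global))"
    by (intro integrable_iid_frequency prob_space_bernoulli_family) auto
  have not_full_int: "integrable ?P (\<lambda>w. of_bool (\<not> full w) :: real)"
    unfolding full_def by (intro integrable_bounded_prob[OF P.prob_space_axioms, where B=1]) auto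
  have "(\<integral>w. frequency n (\<lambda>i. w i Global) \<partial>?P) = (\<integral>\<omega>. of_bool (\<omega> Global) \<partial>bernoulli_family nu_prob)"
    using \<open>n > 0\<close> by (intro integral_iid_frequency prob_space_bernoulli_family) auto
  moreover have "(\<integral>w. of_bool (\<not> full w) \<partial>?P) \<le> 1 / (width n * level n ^ n)"
    unfolding full_def using level_pos[of n] level_le_1[of n]
    by (intro integral_no_full_column_le) (auto simp: inj_on_def width_def)
  moreover have "(\<integral>w. frequency n (\<lambda>i. w i Global) - level n - of_bool (\<not> full w) \<partial>?P) \<le> Delta n nu"
    unfolding Delta_nu full_def using Global_int not_full_int gram_diag_le_1
    by (intro integral_mono sup_deviation_nu_ge integrable_sup_deviation P.prob_space_axioms
        measurable_nu_coord) (auto simp: full_def)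
  ultimately show ?thesis
    using Global_int not_full_int by (simp add: P.prob_space width_level_power integral_nu_Global)
qed

lemma Delta_nu_tendsto: "(\<lambda>n. Delta n nu) \<longlonglongrightarrow> 1/2"
proof (rule tendsto_sandwich)
  show "\<forall>\<^sub>F n in sequentially. 1/2 - level n - 1 / (real n + 1) \<le> Delta n nu"
    using eventually_gt_at_top[of 0] by eventually_elim (rule Delta_nu_ge)
  show "\<forall>\<^sub>F n in sequentially. Delta n nu \<le> 1/2 + 1 / sqrt n"
    using eventually_gt_at_top[of 0] by eventually_elim (rule Delta_nu_le)
  show "(\<lambda>n. 1/2 - level n - 1 / (real n + 1)) \<longlonglongrightarrow> 1/2"
    unfolding level_def by real_asymp
  show "(\<lambda>n. 1/2 + 1 / sqrt (real n)) \<longlonglongrightarrow> 1/2"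
    by real_asymp
qed

section \<open>Empirical deviations under \<open>mu\<close>\<close>

lemma Delta_mu:
  "Delta n mu = (\<integral>w. sup_deviation n (\<lambda>j. gram j j) (\<lambda>i. mu_coord (w i)) \<partial>iid n (bernoulli_family mu_prob))"
  unfolding mu_def integral_mu_coord[symmetric]
  by (intro Delta_distr prob_space_bernoulli_family measurable_bitspaceI measurable_mu_coord)

lemma integral_some_high_cluster_le:
  "(\<integral>\<omega>. of_bool (\<exists>c>C. \<omega> (Cluster c)) \<partial>bernoulli_family mu_prob) \<le> 4 * level C"
proof -
  let ?B = "bernoulli_family mu_prob"
  interpret prob_space ?B by (rule prob_space_bernoulli_family)
  define A where "A c = cylinder {Cluster (c + Suc C)} {}" for c
  have A_measure: "measure ?B (A c) = mu_cluster_prob (c + Suc C)" for c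
    unfolding A_def by (simp add: measure_bernoulli_family_cylinder mu_prob_bounds)
  have A_bound: "measure ?B (A c) \<le> 2 * level C * (1/2) ^ c" for c
  proof -
    have "4 * level (c + Suc C) = 2 * level C * (1/2) ^ c"
      using level_add[of "Suc c" C] by (simp add: power_one_over)
    then show ?thesis
      using mu_cluster_prob_bounds[of "c + Suc C"] by (simp add: A_measure)
  qed
  have geometric: "summable (\<lambda>c. 2 * level C * (1/2::real) ^ c)"
    by (intro summable_mult summable_geometric) simp
  have A_summable: "summable (\<lambda>c. measure ?B (A c))"
    using A_bound by (intro summable_comparison_test[OF _ geometric]) auto
  have high_eq: "{\<omega>. \<exists>c>C. \<omega> (Cluster c)} = (\<Union>c. A c)"
  proof (intro set_eqI iffI)
    fix \<omega> assume "\<omega> \<in> {\<omega>. \<exists>c>C. \<omega> (Cluster c)}"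
    then obtain c where "c > C" "\<omega> (Cluster c)" by auto
    then have "\<omega> \<in> A (c - Suc C)" by (simp add: A_def cylinder_def)
    then show "\<omega> \<in> (\<Union>c. A c)" by blast
  next
    fix \<omega> assume "\<omega> \<in> (\<Union>c. A c)"
    then obtain c where "\<omega> (Cluster (c + Suc C))" by (auto simp: A_def cylinder_def)
    then show "\<omega> \<in> {\<omega>. \<exists>c>C. \<omega> (Cluster c)}" using less_add_Suc2 by blast
  qed
  have "(\<lambda>\<omega>. of_bool (\<exists>c>C. \<omega> (Cluster c)) :: real) = indicator (\<Union>c. A c)"
    unfolding high_eq[symmetric] by (auto simp: indicator_def)
  then have "(\<integral>\<omega>. of_bool (\<exists>c>C. \<omega> (Cluster c)) \<partial>?B) = measure ?B (\<Union>c. A c)"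
    by simp
  also have "\<dots> \<le> (\<Sum>c. measure ?B (A c))"
    using A_summable by (intro finite_measure_subadditive_countably) (auto simp: A_def sets_bernoulli_family_cylinder)
  also have "\<dots> \<le> (\<Sum>c. 2 * level C * (1/2) ^ c)"
    using A_bound A_summable geometric by (rule suminf_le)
  also have "\<dots> = 4 * level C"
    by (simp add: suminf_mult suminf_geometric summable_geometric)
  finally show ?thesis .
qed

definition low_coords :: "nat \<Rightarrow> nat set" where
  "low_coords C = prod_encode ` (SIGMA c:{..C}. {..<width c})"

lemma finite_low_coords: "finite (low_coords C)"
  by (simp add: low_coords_def)

lemma cluster_gt_if_not_low: "active j \<Longrightarrow> j \<notin> low_coords C \<Longrightarrow> C < cluster j"
  unfolding low_coords_def active_def cluster_def slot_def
  by (metis (no_types, lifting) SigmaI atMost_iff image_eqI lessThan_iff not_less prod.collapse prod_decode_inverse)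

lemma sup_deviation_mu_le:
  "sup_deviation n (\<lambda>j. gram j j) (\<lambda>i. mu_coord (w i))
    \<le> (\<Sum>j\<in>low_coords C. \<bar>frequency n (\<lambda>i. mu_coord (w i) j) - gram j j\<bar>)
      + frequency n (\<lambda>i. \<exists>c>C. w i (Cluster c)) + level C"
  (is "_ \<le> ?low + ?high + _")
proof (rule sup_deviation_le_bound)
  fix j
  have "0 \<le> ?low" "0 \<le> ?high" "0 < level C"
    by (simp_all add: sum_nonneg frequency_nonneg level_pos)
  consider "j \<in> low_coords C" | "\<not> active j" | "active j" "C < cluster j"
    using cluster_gt_if_not_low by blast
  then show "\<bar>frequency n (\<lambda>i. mu_coord (w i) j) - gram j j\<bar> \<le> ?low + ?high + level C"
  proof cases
    case 1
    then have "\<bar>frequency n (\<lambda>i. mu_coord (w i) j) - gram j j\<bar> \<le> ?low"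
      by (intro member_le_sum[where f="\<lambda>j. \<bar>frequency n (\<lambda>i. mu_coord (w i) j) - gram j j\<bar>"]
          finite_low_coords) auto
    with \<open>0 \<le> ?high\<close> \<open>0 < level C\<close> show ?thesis by linarith
  next
    case 2
    with \<open>0 \<le> ?low\<close> \<open>0 \<le> ?high\<close> \<open>0 < level C\<close> show ?thesis
      by (simp add: mu_coord_def gram_def frequency_def)
  next
    case 3
    have "frequency n (\<lambda>i. mu_coord (w i) j) \<le> ?high"
      using 3 by (intro frequency_mono) (auto simp: mu_coord_def)
    moreover have "gram j j \<le> level C"
      using gram_diag_bounds[of j] level_antimono[of C "cluster j"] 3 by simp
    ultimately show ?thesis
      using \<open>0 \<le> ?low\<close> frequency_nonneg[of n "\<lambda>i. mu_coord (w i) j"] gram_diag_bounds[of j] by linarith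
  qed
qed

lemma Delta_mu_le:
  assumes "n > 0"
  shows "Delta n mu \<le> card (low_coords C) / sqrt n + 5 * level C"
proof -
  let ?P = "iid n (bernoulli_family mu_prob)"
  interpret P: prob_space ?P by (rule prob_space_iid[OF prob_space_bernoulli_family])
  define dev where "dev j w = \<bar>frequency n (\<lambda>i. mu_coord (w i) j) - gram j j\<bar>" for j w
  define high where "high w = frequency n (\<lambda>i. \<exists>c>C. w i (Cluster c))" for w
  have dev_int: "integrable ?P (dev j)" for j
    unfolding dev_def using gram_diag_le_1[of j]
    by (intro integrable_iid_frequency_deviation prob_space_bernoulli_family) auto
  have high_int: "integrable ?P high"
    unfolding high_def by (intro integrable_iid_frequency prob_space_bernoulli_family) auto
  have dev_integral: "(\<integral>w. dev j w \<partial>?P) \<le> 1 / sqrt n" for j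
    using integral_iid_abs_frequency_deviation_le[OF prob_space_bernoulli_family[of mu_prob],
        where P="\<lambda>\<omega>. mu_coord \<omega> j" and n=n] \<open>n > 0\<close>
    by (simp add: dev_def integral_mu_coord)
  have "(\<integral>w. high w \<partial>?P) = (\<integral>\<omega>. of_bool (\<exists>c>C. \<omega> (Cluster c)) \<partial>bernoulli_family mu_prob)"
    unfolding high_def using \<open>n > 0\<close> by (intro integral_iid_frequency prob_space_bernoulli_family) auto
  then have high_integral: "(\<integral>w. high w \<partial>?P) \<le> 4 * level C"
    using integral_some_high_cluster_le by simp
  have pointwise: "sup_deviation n (\<lambda>j. gram j j) (\<lambda>i. mu_coord (w i)) \<le> (\<Sum>j\<in>low_coords C. dev j w) + high w + level C"
    for w
    unfolding dev_def high_def by (rule sup_deviation_mu_le)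
  have "Delta n mu \<le> (\<integral>w. (\<Sum>j\<in>low_coords C. dev j w) + high w + level C \<partial>?P)"
    unfolding Delta_mu using dev_int high_int pointwise gram_diag_le_1
    by (intro integral_mono integrable_sup_deviation P.prob_space_axioms measurable_iid_component) auto
  also have "\<dots> = (\<Sum>j\<in>low_coords C. \<integral>w. dev j w \<partial>?P) + (\<integral>w. high w \<partial>?P) + level C"
    using dev_int high_int by (simp add: Bochner_Integration.integral_sum P.prob_space)
  also have "\<dots> \<le> (\<Sum>j\<in>low_coords C. 1 / sqrt n) + 4 * level C + level C"
    using dev_integral high_integral by (intro add_mono sum_mono) auto
  finally show ?thesis by simp
qed

lemma Delta_mu_nonneg: "0 \<le> Delta n mu"
  unfolding Delta_mu using gram_diag_le_1 by (intro integral_nonneg_AE AE_I2 sup_deviation_nonneg)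

lemma Delta_mu_tendsto: "(\<lambda>n. Delta n mu) \<longlonglongrightarrow> 0"
proof (rule order_tendstoI)
  fix a :: real
  assume "a < 0"
  then show "\<forall>\<^sub>F n in sequentially. a < Delta n mu"
    using Delta_mu_nonneg by (intro always_eventually) (auto intro: less_le_trans)
next
  fix a :: real
  assume "0 < a"
  have "(\<lambda>C. 5 * level C) \<longlonglongrightarrow> 0"
    unfolding level_def by real_asymp
  then have "\<forall>\<^sub>F C in sequentially. 5 * level C < a / 2"
    by (rule order_tendstoD(2)) (use \<open>0 < a\<close> in simp)
  then obtain C where C: "5 * level C < a / 2"
    by (auto simp: eventually_sequentially)
  have "(\<lambda>n. card (low_coords C) / sqrt n) \<longlonglongrightarrow> 0"
    by real_asymp
  then have "\<forall>\<^sub>F n in sequentially. card (low_coords C) / sqrt n < a / 2"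
    using \<open>0 < a\<close> by (intro order_tendstoD(2)) auto
  then show "\<forall>\<^sub>F n in sequentially. Delta n mu < a"
    using eventually_gt_at_top[of 0]
  proof eventually_elim
    case (elim n)
    then show ?case using Delta_mu_le[of n C] C by linarith
  qed
qed

theorem theorem3:
  shows "\<exists>\<mu> \<nu>. prob_space \<mu> \<and> sets \<mu> = sets bitspace \<and>
                prob_space \<nu> \<and> sets \<nu> = sets bitspace \<and>
                (\<forall>i j. (\<integral> x. of_bool (x i) * of_bool (x j) \<partial>\<mu>) = (\<integral> x. of_bool (x i) * of_bool (x j) \<partial>\<nu> :: real)) \<and>
                (\<lambda>n. Delta n \<mu>) \<longlonglongrightarrow> 0 \<and>
                (\<lambda>n. Delta n \<nu>) \<longlonglongrightarrow> 1/2"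
proof (intro exI conjI allI)
  show "prob_space mu" "prob_space nu"
    unfolding mu_def nu_def
    by (intro prob_space.prob_space_distr prob_space_bernoulli_family measurable_bitspaceI measurable_mu_coord
        measurable_nu_coord)+
  show "sets mu = sets bitspace" "sets nu = sets bitspace"
    by (simp_all add: mu_def nu_def)
  show "(\<integral>x. of_bool (x i) * of_bool (x j) \<partial>mu) = (\<integral>x. of_bool (x i) * of_bool (x j) \<partial>nu :: real)" for i j
    by (simp add: integral_mu_pair integral_nu_pair)
  show "(\<lambda>n. Delta n mu) \<longlonglongrightarrow> 0" by (rule Delta_mu_tendsto)
  show "(\<lambda>n. Delta n nu) \<longlonglongrightarrow> 1/2" by (rule Delta_nu_tendsto)
qed

end
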